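(* Let $A$ be the adjacency matrix of a graph $G=(V,E)$ on $p$ vertices and let $d$ be the maximum vertex degree in $G$. Then $\gamma_{pd}=pd\cdot\delta+S_A$ is entanglement breaking. In particular, $t_{eb}\le pd$.
   Context: $A=(a_{i,j})$ is a self-adjoint $p\times p$ matrix with entries in $\{0,1\}$ and zero diagonal; $G$ is the simple graph with $(i,j)$ an edge iff $a_{i,j}=1$. $S_A: M_p\to M_p$ is the Schur product map $S_A(B)=(a_{i,j}b_{i,j})$. $tr(X)=\frac1p\mathrm{Tr}(X)$, $\delta(X)=tr(X)I_p$, and $\gamma_t=t\delta+S_A$ for real $t$. A map $\phi: M_p\to M_p$ is entanglement breaking if it can be written as $\phi(X)=\sum_k v_k w_k^*Xw_kv_k^*$ for finitely many vectors $w_k,v_k\in\mathbb{C}^p$. $t_{eb}=\min\{t:\gamma_t\text{ is entanglement breaking}\}$. *)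

theory Defs
  imports "HOL-Analysis.Analysis"
begin

text \<open>Matrices in M_p are modelled as complex^'n^'n with p = CARD('n).\<close>

definition ntrace :: "complex^'n::finite^'n \<Rightarrow> complex" where
  "ntrace X = (\<Sum>i\<in>UNIV. X$i$i) / of_nat CARD('n)"

definition delta_map :: "complex^'n::finite^'n \<Rightarrow> complex^'n^'n" where
  "delta_map X = (\<chi> i j. if i = j then ntrace X else 0)"

definition schur_map :: "complex^'n::finite^'n \<Rightarrow> complex^'n^'n \<Rightarrow> complex^'n^'n" where
  "schur_map A B = (\<chi> i j. A$i$j * B$i$j)"

definition gamma_map :: "real \<Rightarrow> complex^'n::finite^'n \<Rightarrow> complex^'n^'n \<Rightarrow> complex^'n^'n" where
  "gamma_map t A X = (\<chi> i j. complex_of_real t * delta_map X $i$j + schur_map A X $i$j)"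

definition entanglement_breaking :: "(complex^'n::finite^'n \<Rightarrow> complex^'n^'n) \<Rightarrow> bool" where
  "entanglement_breaking \<phi> \<longleftrightarrow>
     (\<exists>ws vs :: (complex^'n) list. length ws = length vs \<and>
        (\<forall>X. \<phi> X = (\<chi> i j. \<Sum>k<length ws.
            (vs!k)$i * (\<Sum>a\<in>UNIV. \<Sum>b\<in>UNIV. cnj ((ws!k)$a) * X$a$b * (ws!k)$b) * cnj ((vs!k)$j))))"

definition t_eb :: "complex^'n::finite^'n \<Rightarrow> real" where
  "t_eb A = Inf {t. entanglement_breaking (gamma_map t A)}"

definition max_degree :: "complex^'n::finite^'n \<Rightarrow> nat" where
  "max_degree A = Max (range (\<lambda>i. card {j. A$i$j = 1}))"

end

theory Submission
  imports Defs
begin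

(* gamma_{pd} is a nonnegative combination of maps X |-> v w^* X w v^*.  For an edge (i,j) and a
   fourth root of unity z take v = w = e_i + z e_j: averaging over z leaves
   X_ij E_ij + X_ji E_ji + (X_ii + X_jj)(E_ii + E_jj), so one eighth of the sum over all ordered edges is
   S_A(X) plus the diagonal matrix with entries sum_{j ~ x} (X_xx + X_jj).  The rest of
   pd tr(X) I = d Tr(X) I is the diagonal matrix with entries sum_c r(x,c) X_cc, where
   r(x,c) = d - [c = x] deg x - [x ~ c] >= 0 because d bounds every degree; it is realised by the maps
   X |-> r(x,c) e_x e_c^* X e_c e_x^*.  For the bound on t_eb: if gamma_t is entanglement breaking then
   its value at E_ii has the nonnegative (i,i) entry t/p, so t >= 0 and the infimum is taken over a set
   bounded below. *)

definition qform :: "complex^'n::finite \<Rightarrow> complex^'n^'n \<Rightarrow> complex" where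
  "qform w X = (\<Sum>a\<in>UNIV. \<Sum>b\<in>UNIV. cnj (w$a) * X$a$b * w$b)"

definition rank_one_sandwich :: "complex^'n::finite \<Rightarrow> complex^'n \<Rightarrow> complex^'n^'n \<Rightarrow> complex^'n^'n" where
  "rank_one_sandwich v w X = (\<chi> i j. v$i * qform w X * cnj (v$j))"

lemma entanglement_breaking_iff_sandwich_list:
  fixes \<phi> :: "complex^'n::finite^'n \<Rightarrow> complex^'n^'n"
  shows "entanglement_breaking \<phi> \<longleftrightarrow>
    (\<exists>ps. \<forall>X. \<phi> X = (\<Sum>(v, w)\<leftarrow>ps. rank_one_sandwich v w X))"
proof
  assume "entanglement_breaking \<phi>"
  then obtain ws vs :: "(complex^'n) list" where len: "length ws = length vs"
    and \<phi>_eq: "\<And>X. \<phi> X = (\<chi> i j. \<Sum>k<length ws. (vs!k)$i * qform (ws!k) X * cnj ((vs!k)$j))"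
    unfolding entanglement_breaking_def qform_def by blast
  have "\<phi> X = (\<Sum>(v, w)\<leftarrow>zip vs ws. rank_one_sandwich v w X)" for X
    unfolding \<phi>_eq sum_list_sum_nth
    by (simp add: vec_eq_iff sum_component rank_one_sandwich_def len lessThan_atLeast0 case_prod_beta)
  then show "\<exists>ps. \<forall>X. \<phi> X = (\<Sum>(v, w)\<leftarrow>ps. rank_one_sandwich v w X)" by blast
next
  assume "\<exists>ps. \<forall>X. \<phi> X = (\<Sum>(v, w)\<leftarrow>ps. rank_one_sandwich v w X)"
  then obtain ps where \<phi>_eq: "\<And>X. \<phi> X = (\<Sum>(v, w)\<leftarrow>ps. rank_one_sandwich v w X)" by blast
  have "\<phi> X = (\<chi> i j. \<Sum>k<length (map snd ps).
      (map fst ps!k)$i * qform (map snd ps!k) X * cnj ((map fst ps!k)$j))" for X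
    unfolding \<phi>_eq sum_list_sum_nth
    by (simp add: vec_eq_iff sum_component rank_one_sandwich_def lessThan_atLeast0 case_prod_beta)
  then show "entanglement_breaking \<phi>"
    unfolding entanglement_breaking_def qform_def
    by (intro exI[of _ "map snd ps"] exI[of _ "map fst ps"]) simp
qed

lemma entanglement_breaking_add:
  assumes "entanglement_breaking \<phi>" "entanglement_breaking \<psi>"
  shows "entanglement_breaking (\<lambda>X. \<phi> X + \<psi> X)"
proof -
  obtain ps qs where "\<And>X. \<phi> X = (\<Sum>(v, w)\<leftarrow>ps. rank_one_sandwich v w X)"
    "\<And>X. \<psi> X = (\<Sum>(v, w)\<leftarrow>qs. rank_one_sandwich v w X)"
    using assms unfolding entanglement_breaking_iff_sandwich_list by metis
  then have "\<phi> X + \<psi> X = (\<Sum>(v, w)\<leftarrow>ps @ qs. rank_one_sandwich v w X)" for X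
    by simp
  then show ?thesis
    unfolding entanglement_breaking_iff_sandwich_list by blast
qed

lemma entanglement_breaking_nonneg_combination:
  fixes \<phi> :: "complex^'n::finite^'n \<Rightarrow> complex^'n^'n"
  assumes "finite S" and c_nonneg: "\<And>k. k \<in> S \<Longrightarrow> 0 \<le> c k"
    and \<phi>_eq: "\<And>X. \<phi> X = (\<Sum>k\<in>S. c k *\<^sub>R rank_one_sandwich (v k) (w k) X)"
  shows "entanglement_breaking \<phi>"
proof -
  obtain l where l: "set l = S" "distinct l"
    using finite_distinct_list[OF assms(1)] by blast
  define u where "u k = complex_of_real (sqrt (c k)) *s v k" for k
  have "c k *\<^sub>R rank_one_sandwich (v k) (w k) X = rank_one_sandwich (u k) (w k) X"
    if "k \<in> S" for k X
  proof -
    have "complex_of_real (sqrt (c k)) * cnj (complex_of_real (sqrt (c k))) = complex_of_real (c k)"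
      using c_nonneg[OF that] by (simp flip: of_real_mult)
    then show ?thesis
      unfolding u_def rank_one_sandwich_def
      by (simp add: vec_eq_iff) (simp add: scaleR_conv_of_real algebra_simps)
  qed
  then have "\<phi> X = (\<Sum>(u, w)\<leftarrow>map (\<lambda>k. (u k, w k)) l. rank_one_sandwich u w X)" for X
    unfolding \<phi>_eq l(1)[symmetric] sum.distinct_set_conv_list[OF l(2)]
    by (simp add: o_def cong: map_cong)
  then show ?thesis
    unfolding entanglement_breaking_iff_sandwich_list by blast
qed

definition fourth_roots_unity :: "complex set" where
  "fourth_roots_unity = {1, \<i>, -1, -\<i>}"

lemma qform_axis: "qform (axis c 1) X = X$c$c"
proof -
  have "cnj (axis c 1 $ a) * X$a$b * axis c 1 $ b = (if b = c then (if a = c then X$c$c else 0) else 0)" for a b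
    by (simp add: axis_def)
  then show ?thesis
    unfolding qform_def by simp
qed

lemma qform_axis_pair:
  assumes "i \<noteq> j"
  shows "qform (axis i 1 + axis j z) X = X$i$i + z * X$i$j + cnj z * X$j$i + cnj z * z * X$j$j"
proof -
  have "cnj ((axis i 1 + axis j z)$a) * X$a$b * (axis i 1 + axis j z)$b =
      (if b = i then (if a = i then X$i$i else 0) else 0) + (if b = j then (if a = i then z * X$i$j else 0) else 0)
    + (if b = i then (if a = j then cnj z * X$j$i else 0) else 0)
    + (if b = j then (if a = j then cnj z * z * X$j$j else 0) else 0)" for a b
    using assms by (auto simp: axis_def algebra_simps)
  then show ?thesis
    unfolding qform_def by (simp add: sum.distrib)
qed

lemma rank_one_sandwich_nth: "rank_one_sandwich v w X $ a $ b = v$a * qform w X * cnj (v$b)"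
  by (simp add: rank_one_sandwich_def)

definition pair_block :: "'n::finite \<Rightarrow> 'n \<Rightarrow> complex^'n^'n \<Rightarrow> complex^'n^'n" where
  "pair_block i j X = (\<chi> a b. (if a = i \<and> b = j then X$i$j else 0) + (if a = j \<and> b = i then X$j$i else 0)
    + (if a = b \<and> a = i then X$i$i + X$j$j else 0) + (if a = b \<and> a = j then X$i$i + X$j$j else 0))"

text \<open>Averaging over the fourth roots of unity \<open>z\<close> kills every term of the sandwich by
  \<open>e\<^sub>i + z e\<^sub>j\<close> that carries a factor \<open>z\<close>, \<open>cnj z\<close>, \<open>z\<^sup>2\<close> or \<open>cnj z\<^sup>2\<close>.\<close>

lemma sum_fourth_roots_sandwich:
  assumes "i \<noteq> j"
  shows "(\<Sum>z\<in>fourth_roots_unity. rank_one_sandwich (axis i 1 + axis j z) (axis i 1 + axis j z) X)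
    = 4 *\<^sub>R pair_block i j X"
proof -
  have "(1::complex) \<noteq> \<i>" "(1::complex) \<noteq> -1" "(1::complex) \<noteq> -\<i>" "\<i> \<noteq> -1" "\<i> \<noteq> -\<i>" "-1 \<noteq> -\<i>"
    by (simp_all add: complex_eq_iff)
  with assms have "(\<Sum>z\<in>fourth_roots_unity.
      rank_one_sandwich (axis i 1 + axis j z) (axis i 1 + axis j z) X) $a$b = (4 *\<^sub>R pair_block i j X) $a$b"
    for a b
    unfolding fourth_roots_unity_def sum_component rank_one_sandwich_nth qform_axis_pair[OF assms]
      vector_scaleR_component pair_block_def
    by (cases "a = i"; cases "a = j"; cases "b = i"; cases "b = j")
      (simp_all add: axis_def algebra_simps scaleR_conv_of_real)
  then show ?thesis
    by (simp add: vec_eq_iff)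
qed

lemma sum_edges_pair_block:
  fixes E :: "'n::finite \<Rightarrow> 'n \<Rightarrow> bool" and X :: "complex^'n^'n"
  assumes sym: "\<And>i j. E i j \<Longrightarrow> E j i"
  shows "(\<Sum>i\<in>UNIV. \<Sum>j\<in>UNIV. of_bool (E i j) * pair_block i j X $a$b)
    = 2 * ((if E a b then X$a$b else 0) + (if a = b then \<Sum>j | E a j. X$a$a + X$j$j else 0))"
proof -
  define D where "D = (if a = b then \<Sum>j | E a j. X$a$a + X$j$j else 0)"
  have "(\<Sum>i\<in>UNIV. \<Sum>j\<in>UNIV. of_bool (E i j) * (if a = i \<and> b = j then X$i$j else 0))
      = (\<Sum>i\<in>UNIV. \<Sum>j\<in>UNIV. if j = b then if i = a then of_bool (E a b) * X$a$b else 0 else 0)"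
    by (intro sum.cong) auto
  moreover have "(\<Sum>i\<in>UNIV. \<Sum>j\<in>UNIV. of_bool (E i j) * (if a = j \<and> b = i then X$j$i else 0))
      = (\<Sum>i\<in>UNIV. \<Sum>j\<in>UNIV. if j = a then if i = b then of_bool (E a b) * X$a$b else 0 else 0)"
    using sym by (intro sum.cong) auto
  moreover have "(\<Sum>i\<in>UNIV. \<Sum>j\<in>UNIV. of_bool (E i j) * (if a = b \<and> a = i then X$i$i + X$j$j else 0))
      = (\<Sum>j\<in>UNIV. \<Sum>i\<in>UNIV. if i = a then if a = b then of_bool (E a j) * (X$a$a + X$j$j) else 0 else 0)"
    by (subst sum.swap) (intro sum.cong, auto)
  moreover have "(\<Sum>i\<in>UNIV. \<Sum>j\<in>UNIV. of_bool (E i j) * (if a = b \<and> a = j then X$i$i + X$j$j else 0))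
      = (\<Sum>i\<in>UNIV. \<Sum>j\<in>UNIV. if j = a then if a = b then of_bool (E a i) * (X$a$a + X$i$i) else 0 else 0)"
    using sym by (intro sum.cong) (auto simp: add.commute)
  ultimately have "(\<Sum>i\<in>UNIV. \<Sum>j\<in>UNIV. of_bool (E i j) * (if a = i \<and> b = j then X$i$j else 0))
      = (if E a b then X$a$b else 0)"
    and "(\<Sum>i\<in>UNIV. \<Sum>j\<in>UNIV. of_bool (E i j) * (if a = j \<and> b = i then X$j$i else 0))
      = (if E a b then X$a$b else 0)"
    and "(\<Sum>i\<in>UNIV. \<Sum>j\<in>UNIV. of_bool (E i j) * (if a = b \<and> a = i then X$i$i + X$j$j else 0)) = D"
    and "(\<Sum>i\<in>UNIV. \<Sum>j\<in>UNIV. of_bool (E i j) * (if a = b \<and> a = j then X$i$i + X$j$j else 0)) = D"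
    unfolding D_def by (simp_all add: sum.inter_filter[symmetric])
  note parts = this
  have "(\<Sum>i\<in>UNIV. \<Sum>j\<in>UNIV. of_bool (E i j) * pair_block i j X $a$b)
      = (\<Sum>i\<in>UNIV. \<Sum>j\<in>UNIV. of_bool (E i j) * (if a = i \<and> b = j then X$i$j else 0))
      + (\<Sum>i\<in>UNIV. \<Sum>j\<in>UNIV. of_bool (E i j) * (if a = j \<and> b = i then X$j$i else 0))
      + (\<Sum>i\<in>UNIV. \<Sum>j\<in>UNIV. of_bool (E i j) * (if a = b \<and> a = i then X$i$i + X$j$j else 0))
      + (\<Sum>i\<in>UNIV. \<Sum>j\<in>UNIV. of_bool (E i j) * (if a = b \<and> a = j then X$i$i + X$j$j else 0))"
    by (simp only: pair_block_def vec_lambda_beta distrib_left sum.distrib)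
  also have "\<dots> = 2 * ((if E a b then X$a$b else 0) + D)"
    unfolding parts by simp
  finally show ?thesis
    unfolding D_def .
qed

lemma sum_edge_sandwiches:
  fixes E :: "'n::finite \<Rightarrow> 'n \<Rightarrow> bool" and X :: "complex^'n^'n"
  assumes sym: "\<And>i j. E i j \<Longrightarrow> E j i" and irrefl: "\<And>i. \<not> E i i"
  shows "(\<Sum>((i, j), z)\<in>(UNIV \<times> UNIV) \<times> fourth_roots_unity.
      (of_bool (E i j) / 8) *\<^sub>R rank_one_sandwich (axis i 1 + axis j z) (axis i 1 + axis j z) X) $a$b
    = (if E a b then X$a$b else 0) + (if a = b then \<Sum>j | E a j. X$a$a + X$j$j else 0)"
proof -
  have entry: "((of_bool (E i j) / 8) *\<^sub>R
      (\<Sum>z\<in>fourth_roots_unity. rank_one_sandwich (axis i 1 + axis j z) (axis i 1 + axis j z) X)) $a$b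
    = of_bool (E i j) * pair_block i j X $a$b / 2" for i j
  proof (cases "E i j")
    case True
    then have "i \<noteq> j"
      using irrefl by blast
    with True show ?thesis
      unfolding sum_fourth_roots_sandwich[OF \<open>i \<noteq> j\<close>] vector_scaleR_component
      by (simp add: scaleR_conv_of_real)
  qed simp
  have "(\<Sum>((i, j), z)\<in>(UNIV \<times> UNIV) \<times> fourth_roots_unity.
      (of_bool (E i j) / 8) *\<^sub>R rank_one_sandwich (axis i 1 + axis j z) (axis i 1 + axis j z) X)
    = (\<Sum>i\<in>UNIV. \<Sum>j\<in>UNIV. (of_bool (E i j) / 8) *\<^sub>R
        (\<Sum>z\<in>fourth_roots_unity. rank_one_sandwich (axis i 1 + axis j z) (axis i 1 + axis j z) X))"
    by (simp add: sum.cartesian_product' scaleR_sum_right del: UNIV_Times_UNIV)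
  then have "(\<Sum>((i, j), z)\<in>(UNIV \<times> UNIV) \<times> fourth_roots_unity.
      (of_bool (E i j) / 8) *\<^sub>R rank_one_sandwich (axis i 1 + axis j z) (axis i 1 + axis j z) X) $a$b
    = (\<Sum>i\<in>UNIV. \<Sum>j\<in>UNIV. of_bool (E i j) * pair_block i j X $a$b) / 2"
    by (simp only: sum_component entry sum_divide_distrib)
  also have "\<dots> = (if E a b then X$a$b else 0) + (if a = b then \<Sum>j | E a j. X$a$a + X$j$j else 0)"
    by (simp only: sum_edges_pair_block[OF sym]) simp
  finally show ?thesis .
qed

lemma sum_axis_sandwiches:
  fixes c :: "'n::finite \<Rightarrow> 'n \<Rightarrow> real" and X :: "complex^'n^'n"
  shows "(\<Sum>(a, b)\<in>UNIV \<times> UNIV. c a b *\<^sub>R rank_one_sandwich (axis a 1) (axis b 1) X) $x$y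
    = (if x = y then \<Sum>b\<in>UNIV. complex_of_real (c x b) * X$b$b else 0)"
proof -
  have entry: "(c a b *\<^sub>R rank_one_sandwich (axis a 1) (axis b 1) X) $x$y
      = (if x = y then if a = x then complex_of_real (c x b) * X$b$b else 0 else 0)" for a b
    unfolding vector_scaleR_component rank_one_sandwich_nth qform_axis
    by (simp add: axis_def scaleR_conv_of_real)
  have "(\<Sum>(a, b)\<in>UNIV \<times> UNIV. c a b *\<^sub>R rank_one_sandwich (axis a 1) (axis b 1) X) $x$y
    = (\<Sum>b\<in>UNIV. \<Sum>a\<in>UNIV. if x = y then if a = x then complex_of_real (c x b) * X$b$b else 0 else 0)"
    unfolding sum.cartesian_product' sum_component prod.case entry by (rule sum.swap)
  then show ?thesis
    by (cases "x = y") simp_all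
qed

lemma gamma_map_nth:
  fixes A :: "complex^'n::finite^'n"
  assumes "\<forall>i j. A$i$j = 0 \<or> A$i$j = 1"
  shows "gamma_map (real CARD('n) * d) A X $x$y
    = (if x = y then complex_of_real d * (\<Sum>c\<in>UNIV. X$c$c) else 0) + (if A$x$y = 1 then X$x$y else 0)"
  using assms by (auto simp: gamma_map_def delta_map_def schur_map_def ntrace_def)

definition residual_weight :: "('n::finite \<Rightarrow> 'n \<Rightarrow> bool) \<Rightarrow> real \<Rightarrow> 'n \<Rightarrow> 'n \<Rightarrow> real" where
  "residual_weight E d x c = d - (if c = x then real (card {j. E x j}) else 0) - of_bool (E x c)"

lemma residual_weight_nonneg:
  fixes E :: "'n::finite \<Rightarrow> 'n \<Rightarrow> bool"
  assumes irrefl: "\<And>i. \<not> E i i" and degree_le: "\<And>i. real (card {j. E i j}) \<le> d"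
  shows "0 \<le> residual_weight E d x c"
proof (cases "E x c")
  case True
  then have "c \<noteq> x" "1 \<le> card {j. E x j}"
    using irrefl by (auto simp: Suc_le_eq card_gt_0_iff)
  then show ?thesis
    using degree_le[of x] unfolding residual_weight_def by simp
next
  case False
  then show ?thesis
    using degree_le[of x] unfolding residual_weight_def by simp
qed

lemma sum_residual_weight:
  fixes E :: "'n::finite \<Rightarrow> 'n \<Rightarrow> bool" and X :: "complex^'n^'n"
  shows "(\<Sum>j | E x j. X$x$x + X$j$j) + (\<Sum>c\<in>UNIV. complex_of_real (residual_weight E d x c) * X$c$c)
    = complex_of_real d * (\<Sum>c\<in>UNIV. X$c$c)"
proof -
  have "complex_of_real (residual_weight E d x c) * X$c$c = complex_of_real d * X$c$c
      - (if c = x then of_nat (card {j. E x j}) * X$x$x else 0) - of_bool (E x c) * X$c$c" for c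
    by (auto simp: residual_weight_def algebra_simps)
  then have "(\<Sum>c\<in>UNIV. complex_of_real (residual_weight E d x c) * X$c$c)
      = complex_of_real d * (\<Sum>c\<in>UNIV. X$c$c) - of_nat (card {j. E x j}) * X$x$x - (\<Sum>j | E x j. X$j$j)"
    by (simp add: sum_subtractf sum_distrib_left)
  moreover have "(\<Sum>j | E x j. X$x$x + X$j$j) = of_nat (card {j. E x j}) * X$x$x + (\<Sum>j | E x j. X$j$j)"
    by (simp add: sum.distrib)
  ultimately show ?thesis
    by simp
qed

lemma entanglement_breaking_gamma_map:
  fixes A :: "complex^'n::finite^'n" and d :: real
  assumes A01: "\<forall>i j. A$i$j = 0 \<or> A$i$j = 1"
    and A_hermitian: "\<forall>i j. A$j$i = cnj (A$i$j)"
    and A_diag: "\<forall>i. A$i$i = 0"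
    and degree_le: "\<And>i. real (card {j. A$i$j = 1}) \<le> d"
  shows "entanglement_breaking (gamma_map (real CARD('n) * d) A)"
proof -
  define E where "E i j \<longleftrightarrow> A$i$j = 1" for i j
  have sym: "E i j \<Longrightarrow> E j i" for i j
    using A_hermitian unfolding E_def by (metis complex_cnj_one)
  have irrefl: "\<not> E i i" for i
    using A_diag unfolding E_def by simp
  have "real (card {j. E i j}) \<le> d" for i
    using degree_le unfolding E_def .
  then have weight_nonneg: "0 \<le> residual_weight E d a b" for a b
    using residual_weight_nonneg irrefl by blast
  define edges where "edges X = (\<Sum>((i, j), z)\<in>(UNIV \<times> UNIV) \<times> fourth_roots_unity.
      (of_bool (E i j) / 8) *\<^sub>R rank_one_sandwich (axis i 1 + axis j z) (axis i 1 + axis j z) X)" for X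
  define diag where "diag X = (\<Sum>(a, b)\<in>UNIV \<times> UNIV.
      residual_weight E d a b *\<^sub>R rank_one_sandwich (axis a 1) (axis b 1) X)" for X
  have gamma_nth: "gamma_map (real CARD('n) * d) A X $x$y = edges X $x$y + diag X $x$y" for X x y
  proof -
    have "edges X $x$y = (if E x y then X$x$y else 0) + (if x = y then \<Sum>j | E x j. X$x$x + X$j$j else 0)"
      unfolding edges_def by (rule sum_edge_sandwiches[OF sym irrefl])
    moreover have "diag X $x$y
        = (if x = y then \<Sum>c\<in>UNIV. complex_of_real (residual_weight E d x c) * X$c$c else 0)"
      unfolding diag_def by (rule sum_axis_sandwiches)
    ultimately show ?thesis
      unfolding gamma_map_nth[OF A01] E_def[symmetric]
      using sum_residual_weight[where E=E and d=d and x=x and X=X] irrefl by auto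
  qed
  have "entanglement_breaking edges"
    by (rule entanglement_breaking_nonneg_combination[where c="\<lambda>((i, j), z). of_bool (E i j) / 8"
          and v="\<lambda>((i, j), z). axis i 1 + axis j z" and w="\<lambda>((i, j), z). axis i 1 + axis j z"])
      (auto simp: edges_def fourth_roots_unity_def split_def)
  moreover have "entanglement_breaking diag"
    using weight_nonneg by (intro entanglement_breaking_nonneg_combination[where c="\<lambda>(a, b). residual_weight E d a b"
          and v="\<lambda>(a, b). axis a 1" and w="\<lambda>(a, b). axis b 1"])
      (auto simp: diag_def split_def)
  moreover have "gamma_map (real CARD('n) * d) A = (\<lambda>X. edges X + diag X)"
    by (simp add: fun_eq_iff vec_eq_iff gamma_nth)
  ultimately show ?thesis
    by (simp add: entanglement_breaking_add)
qed

lemma entanglement_breaking_matrix_unit_diag_nonneg: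
  fixes \<phi> :: "complex^'n::finite^'n \<Rightarrow> complex^'n^'n"
  assumes "entanglement_breaking \<phi>"
  shows "\<exists>r\<ge>0. \<phi> (\<chi> a b. of_bool (a = i \<and> b = i)) $j$j = complex_of_real r"
proof -
  obtain ws vs :: "(complex^'n) list"
    where \<phi>_eq: "\<And>X. \<phi> X = (\<chi> i j. \<Sum>k<length ws. (vs!k)$i * qform (ws!k) X * cnj ((vs!k)$j))"
    using assms unfolding entanglement_breaking_def qform_def by blast
  have "qform w (\<chi> a b. of_bool (a = i \<and> b = i)) = cnj (w$i) * w$i" for w :: "complex^'n"
  proof -
    have "cnj (w$a) * (\<chi> a b. of_bool (a = i \<and> b = i)) $a$b * w$b
        = (if b = i then if a = i then cnj (w$i) * w$i else 0 else 0)" for a b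
      by simp
    then show ?thesis
      unfolding qform_def by simp
  qed
  then have "\<phi> (\<chi> a b. of_bool (a = i \<and> b = i)) $j$j
      = complex_of_real (\<Sum>k<length ws. (cmod ((vs!k)$j))\<^sup>2 * (cmod ((ws!k)$i))\<^sup>2)"
    unfolding \<phi>_eq of_real_sum of_real_mult complex_norm_square by (simp add: algebra_simps)
  then show ?thesis
    by (intro exI[of _ "\<Sum>k<length ws. (cmod ((vs!k)$j))\<^sup>2 * (cmod ((ws!k)$i))\<^sup>2"])
      (simp add: sum_nonneg)
qed

lemma entanglement_breaking_gamma_map_imp_nonneg:
  fixes A :: "complex^'n::finite^'n"
  assumes A_diag: "\<forall>i. A$i$i = 0" and "entanglement_breaking (gamma_map t A)"
  shows "0 \<le> t"
proof -
  fix i :: 'n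
  obtain r where "0 \<le> r" and r: "gamma_map t A (\<chi> a b. of_bool (a = i \<and> b = i)) $i$i = complex_of_real r"
    using entanglement_breaking_matrix_unit_diag_nonneg[OF assms(2)] by blast
  have "gamma_map t A (\<chi> a b. of_bool (a = i \<and> b = i)) $i$i = complex_of_real (t / real CARD('n))"
    using A_diag by (simp add: gamma_map_def delta_map_def schur_map_def ntrace_def)
  with r \<open>0 \<le> r\<close> have "0 \<le> t / real CARD('n)"
    by (metis of_real_eq_iff)
  then show ?thesis
    by (simp add: zero_le_divide_iff)
qed

theorem mainTheorem10:
  fixes A :: "complex^'n::finite^'n"
  assumes "\<forall>i j. A$i$j = 0 \<or> A$i$j = 1"
    and "\<forall>i j. A$j$i = cnj (A$i$j)"
    and "\<forall>i. A$i$i = 0"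
  shows "entanglement_breaking (gamma_map (real CARD('n) * real (max_degree A)) A)
       \<and> t_eb A \<le> real CARD('n) * real (max_degree A)"
proof
  have "real (card {j. A$i$j = 1}) \<le> real (max_degree A)" for i
    unfolding max_degree_def by (intro of_nat_mono Max_ge) auto
  then show eb: "entanglement_breaking (gamma_map (real CARD('n) * real (max_degree A)) A)"
    using entanglement_breaking_gamma_map[OF assms] by blast
  have "bdd_below {t. entanglement_breaking (gamma_map t A)}"
    using entanglement_breaking_gamma_map_imp_nonneg[OF assms(3)] unfolding bdd_below_def by blast
  with eb show "t_eb A \<le> real CARD('n) * real (max_degree A)"
    unfolding t_eb_def by (intro cInf_lower) auto
qed

end
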